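(* Let $(X_1,M_1),\dots,(X_n,M_n)$ be i.i.d. copies of $(X,M)\sim\mathbb{P}_{X,M}$, $X\in\mathbb{R}^d$, $M\in\{0,1\}^d$, and let $\{P_\theta:\theta\in\Theta\}$ be any model on $\mathbb{R}^d$. For $x\in\mathbb{R}^d$, $m\in\{0,1\}^d$ define $$\ell(x,m;\theta)=\big\langle\Phi(P_\theta^{(m)}),\Phi(P_\theta^{(m)})\big\rangle_{\mathcal{H}}-2\big\langle\Phi(P_\theta^{(m)}),\Phi(x^{(m)})\big\rangle_{\mathcal{H}}$$ for $m\neq(1,\dots,1)$ and $\ell(x,(1,\dots,1);\theta)=0$, and set $\widehat L_n(\theta)=\frac1n\sum_{i=1}^n\ell(X_i,M_i;\theta)$ and $L(\theta)=\mathbb{E}_{(X,M)}[\ell(X,M;\theta)]$. Then $$\sup_{\theta\in\Theta}\big|\widehat L_n(\theta)-L(\theta)\big|\to0\quad\mathbb{P}_{X,M}\text{-almost surely as }n\to\infty.$$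
   Context: $M_j=0$ means $X_j$ observed, $M_j=1$ missing. For $m\in\{0,1\}^d$, $x^{(m)}$ is the subvector of observed coordinates $\{j:m_j=0\}$ and $Q^{(m)}$ the law of $Y^{(m)}$, $Y\sim Q$. $k$ is a positive definite kernel bounded by $1$, dimension-independent (same formula in every dimension, e.g. Gaussian kernel), with RKHS $\mathcal{H}$; $\Phi(Q)=\mathbb{E}_{Y\sim Q}[k(Y,\cdot)]$ is the mean embedding and $\Phi(x)=k(x,\cdot)$. *)

theory Defs
  imports "HOL-Probability.Probability"
begin

text \<open>Vectors in R^d are \<open>real ^ 'd::{finite,linorder}\<close> for a finite, linearly ordered index type \<open>'d::{finite,linorder}\<close>;
  missingness patterns are \<open>m :: 'd::{finite,linorder} \<Rightarrow> bool\<close> with \<open>m j = True\<close> meaning coordinate j is missing.\<close>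

text \<open>Observed subvector \<open>x^(m)\<close>: the observed coordinates, in increasing index order,
  as a list (so its dimension varies with m).\<close>
definition obs_sub :: "('d::{finite,linorder} \<Rightarrow> bool) \<Rightarrow> real ^ 'd::{finite,linorder} \<Rightarrow> real list" where
  "obs_sub m x = map (\<lambda>j. x $ j) (sorted_list_of_set {j. \<not> m j})"

text \<open>A dimension-independent kernel is one function on real lists (vectors of any length).
  Positive definiteness (in every dimension) and symmetry.\<close>
definition pd_kernel :: "(real list \<Rightarrow> real list \<Rightarrow> real) \<Rightarrow> bool" where
  "pd_kernel k \<longleftrightarrow> (\<forall>u v. k u v = k v u) \<and>
     (\<forall>(l::nat) (n::nat) (xs::nat \<Rightarrow> real list) (c::nat \<Rightarrow> real).
        (\<forall>i<n. length (xs i) = l) \<longrightarrow> 0 \<le> (\<Sum>i<n. \<Sum>j<n. c i * c j * k (xs i) (xs j)))"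

text \<open>\<open><\<Phi>(Q^(m)), \<Phi>(Q^(m))>_H\<close> written out via the reproducing property as the double
  kernel integral over \<open>Q^(m)\<close> (image of Q under \<open>y \<mapsto> y^(m)\<close>).\<close>
definition emb_inner_self :: "(real list \<Rightarrow> real list \<Rightarrow> real) \<Rightarrow> (real ^ 'd::{finite,linorder}) measure
    \<Rightarrow> ('d::{finite,linorder} \<Rightarrow> bool) \<Rightarrow> real" where
  "emb_inner_self k Q m = (\<integral>y. (\<integral>y'. k (obs_sub m y) (obs_sub m y') \<partial>Q) \<partial>Q)"

text \<open>\<open><\<Phi>(Q^(m)), \<Phi>(x^(m))>_H = \<integral> k(y^(m), x^(m)) dQ(y)\<close>.\<close>
definition emb_inner_pt :: "(real list \<Rightarrow> real list \<Rightarrow> real) \<Rightarrow> (real ^ 'd::{finite,linorder}) measure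
    \<Rightarrow> ('d::{finite,linorder} \<Rightarrow> bool) \<Rightarrow> real ^ 'd::{finite,linorder} \<Rightarrow> real" where
  "emb_inner_pt k Q m x = (\<integral>y. k (obs_sub m y) (obs_sub m x) \<partial>Q)"

definition mmd_loss :: "(real list \<Rightarrow> real list \<Rightarrow> real) \<Rightarrow> (real ^ 'd::{finite,linorder}) measure
    \<Rightarrow> real ^ 'd::{finite,linorder} \<Rightarrow> ('d::{finite,linorder} \<Rightarrow> bool) \<Rightarrow> real" where
  "mmd_loss k Q x m =
     (if m = (\<lambda>_. True) then 0 else emb_inner_self k Q m - 2 * emb_inner_pt k Q m x)"

end

theory Submission
  imports Defs "HOL-Library.Discrete_Functions"
begin

text \<open>
  The deviation of the empirical loss from its expectation is linear in the sample. Expanding the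
  loss over the finitely many missingness patterns m, it becomes a sum over m of the deviation of
  the frequency of pattern m, weighted by the bounded number \<open><\<Phi>(P\<^sup>(\<^sup>m\<^sup>)), \<Phi>(P\<^sup>(\<^sup>m\<^sup>))>\<close>, and of
  the \<open>P\<^sub>\<theta>\<close>-integral of the deviation of the sample means of \<open>k(y\<^sup>(\<^sup>m\<^sup>), X\<^sub>i\<^sup>(\<^sup>m\<^sup>)) [M\<^sub>i = m]\<close>.
  Both are controlled uniformly in \<theta> once, for a bounded positive semidefinite kernel K and an
  i.i.d. sample \<open>Z\<^sub>i\<close> with law \<mu>, the supremum over w of the deviation of \<open>1/n \<Sum> K(w, Z\<^sub>i)\<close> from
  \<open>\<integral> K(w, z) d\<mu>(z)\<close> tends to 0 almost surely. By Cauchy-Schwarz in the RKHS that supremum is at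
  most the distance between the empirical and the true mean embedding, whose square has expectation
  at most 2/n. This is summable along the squares \<open>n\<^sup>2\<close>, and between consecutive squares the
  deviation moves by \<open>O(1/\<surd>n)\<close>.

  No RKHS is constructed: inner products are written out through the kernel, and positive
  semidefiniteness is extended to the mean embedding by approximating it with empirical means.
\<close>

lemma (in prob_space) abs_integral_le_const:
  fixes f :: "'a \<Rightarrow> real"
  assumes "\<And>x. \<bar>f x\<bar> \<le> B"
  shows "\<bar>\<integral>x. f x \<partial>M\<bar> \<le> B"
proof (cases "integrable M f")
  case True
  have "\<bar>\<integral>x. f x \<partial>M\<bar> \<le> (\<integral>x. \<bar>f x\<bar> \<partial>M)" by (rule integral_abs_bound)
  also have "\<dots> \<le> B" using True assms by (intro integral_le_const) auto
  finally show ?thesis .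
next
  case False
  then show ?thesis using assms[of undefined] by (simp add: not_integrable_integral_eq)
qed

lemma AE_tendsto_0_if_summable_integral:
  fixes X :: "nat \<Rightarrow> 'a \<Rightarrow> real"
  assumes integrable: "\<And>n. integrable M (X n)" and nonneg: "\<And>n x. 0 \<le> X n x"
    and summable: "summable (\<lambda>n. integral\<^sup>L M (X n))"
  shows "AE x in M. (\<lambda>n. X n x) \<longlonglongrightarrow> 0"
proof -
  have [measurable]: "X n \<in> borel_measurable M" for n
    using integrable by blast
  have "(\<integral>\<^sup>+x. (\<Sum>n. ennreal (X n x)) \<partial>M) = (\<Sum>n. \<integral>\<^sup>+x. ennreal (X n x) \<partial>M)"
    by (rule nn_integral_suminf) simp
  also have "\<dots> = (\<Sum>n. ennreal (integral\<^sup>L M (X n)))"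
    by (simp add: nn_integral_eq_integral integrable nonneg)
  also have "\<dots> = ennreal (\<Sum>n. integral\<^sup>L M (X n))"
    using summable by (intro suminf_ennreal2) (auto intro: integral_nonneg_AE nonneg)
  finally have "AE x in M. (\<Sum>n. ennreal (X n x)) \<noteq> \<infinity>"
    by (intro nn_integral_PInf_AE) auto
  then show ?thesis
  proof (rule AE_mp, intro AE_I2 impI)
    fix x assume "(\<Sum>n. ennreal (X n x)) \<noteq> \<infinity>"
    then have "summable (\<lambda>n. X n x)"
      by (intro summable_suminf_not_top nonneg) simp
    then show "(\<lambda>n. X n x) \<longlonglongrightarrow> 0" by (rule summable_LIMSEQ_zero)
  qed
qed

lemma tendsto_SUP_abs_0:
  fixes f :: "nat \<Rightarrow> 'a \<Rightarrow> real"
  assumes bound: "eventually (\<lambda>n. \<forall>x. \<bar>f n x\<bar> \<le> B n) sequentially" and B: "B \<longlonglongrightarrow> 0"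
  shows "(\<lambda>n. SUP x. \<bar>f n x\<bar>) \<longlonglongrightarrow> 0"
proof (rule tendsto_sandwich[OF _ _ tendsto_const B])
  show "eventually (\<lambda>n. 0 \<le> (SUP x. \<bar>f n x\<bar>)) sequentially"
    using bound by eventually_elim (meson UNIV_I abs_ge_zero bdd_aboveI2 cSUP_upper2)
  show "eventually (\<lambda>n. (SUP x. \<bar>f n x\<bar>) \<le> B n) sequentially"
    using bound by eventually_elim (auto intro: cSUP_least)
qed

lemma filterlim_floor_sqrt_at_top: "filterlim floor_sqrt at_top sequentially"
  unfolding filterlim_at_top
  by (intro allI eventually_mono[OF eventually_ge_at_top] le_floor_sqrtI) auto

lemma floor_sqrt_gap_le:
  assumes "0 < N"
  shows "2 * real (N - (floor_sqrt N)\<^sup>2) / real N \<le> 4 / real (floor_sqrt N)"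
proof -
  let ?r = "floor_sqrt N"
  have "N - ?r\<^sup>2 \<le> 2 * ?r"
    using Suc_floor_sqrt_power2_gt[of N] by (simp add: power2_eq_square)
  then have "real ?r * real (N - ?r\<^sup>2) \<le> real ?r * (2 * real ?r)"
    using of_nat_mono[where 'a=real] by (intro mult_left_mono) fastforce+
  also have "\<dots> \<le> 2 * real N"
    using of_nat_mono[OF floor_sqrt_power2_le[of N], where 'a=real] by (simp add: power2_eq_square)
  finally show ?thesis
    using assms by (simp add: field_simps)
qed

section \<open>Deviations of empirical means\<close>

definition sample_dev :: "'a measure \<Rightarrow> (nat \<Rightarrow> 'a) \<Rightarrow> nat \<Rightarrow> ('a \<Rightarrow> real) \<Rightarrow> real" where
  "sample_dev \<mu> z n f = (\<Sum>i<n. f (z i)) / real n - (\<integral>x. f x \<partial>\<mu>)"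

lemma abs_sample_dev_le_prefix:
  assumes \<mu>: "prob_space \<mu>" and f: "\<And>x. \<bar>f x\<bar> \<le> 1" and "m \<le> N" "0 < N"
  shows "\<bar>sample_dev \<mu> z N f\<bar> \<le> \<bar>sample_dev \<mu> z m f\<bar> + 2 * real (N - m) / real N"
proof -
  define tail where "tail = (\<Sum>i\<in>{m..<N}. f (z i) - (\<integral>x. f x \<partial>\<mu>))"
  have mean_le: "\<bar>\<integral>x. f x \<partial>\<mu>\<bar> \<le> 1"
    by (rule prob_space.abs_integral_le_const[OF \<mu> f])
  have "\<bar>tail\<bar> \<le> (\<Sum>i\<in>{m..<N}. 2)"
    unfolding tail_def by (intro order_trans[OF sum_abs] sum_mono order_trans[OF abs_triangle_ineq4])
      (metis add_mono f mean_le one_add_one)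
  then have tail_le: "\<bar>tail\<bar> \<le> 2 * real (N - m)"
    by simp
  have split: "(\<Sum>i<N. f (z i)) = (\<Sum>i<m. f (z i)) + (\<Sum>i\<in>{m..<N}. f (z i))"
    using \<open>m \<le> N\<close> by (simp add: lessThan_atLeast0 sum.atLeastLessThan_concat)
  have "sample_dev \<mu> z N f = real m / real N * sample_dev \<mu> z m f + tail / real N"
    using \<open>m \<le> N\<close> \<open>0 < N\<close> unfolding sample_dev_def tail_def split
    by (cases "m = 0") (simp_all add: sum_subtractf of_nat_diff field_simps)
  also have "\<bar>\<dots>\<bar> \<le> \<bar>sample_dev \<mu> z m f\<bar> + 2 * real (N - m) / real N"
  proof (rule order_trans[OF abs_triangle_ineq add_mono])
    show "\<bar>real m / real N * sample_dev \<mu> z m f\<bar> \<le> \<bar>sample_dev \<mu> z m f\<bar>"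
      unfolding abs_mult using \<open>m \<le> N\<close> \<open>0 < N\<close> by (intro mult_left_le_one_le) auto
    show "\<bar>tail / real N\<bar> \<le> 2 * real (N - m) / real N"
      using tail_le by (simp add: divide_right_mono)
  qed
  finally show ?thesis .
qed

lemma abs_sample_dev_le_2:
  assumes "prob_space \<mu>" and f: "\<And>x. \<bar>f x\<bar> \<le> 1"
  shows "\<bar>sample_dev \<mu> z n f\<bar> \<le> 2"
proof -
  have "\<bar>\<Sum>i<n. f (z i)\<bar> \<le> real n"
    using sum_bounded_above[of "{..<n}" "\<lambda>i. \<bar>f (z i)\<bar>" 1] f by (intro order_trans[OF sum_abs]) simp
  then have "\<bar>(\<Sum>i<n. f (z i)) / real n\<bar> \<le> 1"
    by (cases "n = 0") (simp_all add: field_simps)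
  moreover have "\<bar>\<integral>x. f x \<partial>\<mu>\<bar> \<le> 1"
    by (rule prob_space.abs_integral_le_const[OF assms])
  ultimately show ?thesis
    unfolding sample_dev_def by linarith
qed

lemma abs_sample_dev_le_SUP:
  assumes "prob_space \<mu>" and K: "\<And>w x. \<bar>K w x\<bar> \<le> 1"
  shows "\<bar>sample_dev \<mu> z n (K w)\<bar> \<le> (SUP w. \<bar>sample_dev \<mu> z n (K w)\<bar>)"
  using abs_sample_dev_le_2[OF assms(1) K] by (intro cSUP_upper bdd_aboveI2) auto

lemma sample_dev_sum:
  assumes "finite I" and "\<And>m. m \<in> I \<Longrightarrow> integrable \<mu> (f m)"
  shows "sample_dev \<mu> z n (\<lambda>x. \<Sum>m\<in>I. f m x) = (\<Sum>m\<in>I. sample_dev \<mu> z n (f m))"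
  using assms unfolding sample_dev_def
  by (simp add: integral_sum sum_subtractf sum_divide_distrib sum.swap[of _ I])

lemma sample_dev_lincomb:
  assumes "integrable \<mu> f" "integrable \<mu> g"
  shows "sample_dev \<mu> z n (\<lambda>x. a * f x - b * g x) = a * sample_dev \<mu> z n f - b * sample_dev \<mu> z n g"
  using assms unfolding sample_dev_def
  by (simp add: sum_subtractf sum_distrib_left diff_divide_distrib algebra_simps)

lemma sample_dev_integral:
  fixes f :: "'b \<Rightarrow> 'a \<Rightarrow> real"
  assumes Q: "prob_space Q" and \<mu>: "prob_space \<mu>"
    and f_meas: "(\<lambda>(y, x). f y x) \<in> borel_measurable (Q \<Otimes>\<^sub>M \<mu>)"
    and f_bounded: "\<And>y x. \<bar>f y x\<bar> \<le> B" and z: "\<And>i. z i \<in> space \<mu>"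
  shows "sample_dev \<mu> z n (\<lambda>x. \<integral>y. f y x \<partial>Q) = (\<integral>y. sample_dev \<mu> z n (f y) \<partial>Q)"
proof -
  interpret Q: prob_space Q by (rule Q)
  interpret \<mu>: prob_space \<mu> by (rule \<mu>)
  interpret Q\<mu>: pair_prob_space Q \<mu> by unfold_locales
  have int_pair: "integrable (Q \<Otimes>\<^sub>M \<mu>) (\<lambda>(y, x). f y x)"
    using f_meas f_bounded by (intro Q\<mu>.P.integrable_const_bound[where B=B]) auto
  have int_section: "integrable Q (\<lambda>y. f y (z i))" for i
    using measurable_compose[OF measurable_Pair2'[OF z[of i], of Q] f_meas] f_bounded
    by (intro Q.integrable_const_bound[where B=B]) auto
  have int_inner: "integrable Q (\<lambda>y. \<integral>x. f y x \<partial>\<mu>)"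
    using f_meas \<mu>.abs_integral_le_const[OF f_bounded]
    by (intro Q.integrable_const_bound[where B=B] \<mu>.borel_measurable_lebesgue_integral) auto
  have "(\<integral>y. sample_dev \<mu> z n (f y) \<partial>Q)
      = (\<Sum>i<n. \<integral>y. f y (z i) \<partial>Q) / real n - (\<integral>y. \<integral>x. f y x \<partial>\<mu> \<partial>Q)"
    unfolding sample_dev_def
    by (simp add: int_section int_inner Bochner_Integration.integrable_sum integral_sum)
  also have "(\<integral>y. \<integral>x. f y x \<partial>\<mu> \<partial>Q) = (\<integral>x. \<integral>y. f y x \<partial>Q \<partial>\<mu>)"
    using Q\<mu>.Fubini_integral[OF int_pair] by simp
  finally show ?thesis
    by (simp add: sample_dev_def)
qed

section \<open>Bounded positive semidefinite kernels on i.i.d. samples\<close>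

definition kernel_form :: "('s \<Rightarrow> 's \<Rightarrow> real) \<Rightarrow> nat \<Rightarrow> (nat \<Rightarrow> 's) \<Rightarrow> (nat \<Rightarrow> real) \<Rightarrow> real" where
  "kernel_form K n a c = (\<Sum>i<n. \<Sum>j<n. c i * c j * K (a i) (a j))"

definition seq_append :: "nat \<Rightarrow> (nat \<Rightarrow> 'a) \<Rightarrow> (nat \<Rightarrow> 'a) \<Rightarrow> nat \<Rightarrow> 'a" where
  "seq_append p a b i = (if i < p then a i else b (i - p))"

lemma sum_lessThan_add: "(\<Sum>i<p + (N::nat). f i) = (\<Sum>i<p. f i) + (\<Sum>l<N. f (p + l))"
  by (induction N) (auto simp: add.assoc)

lemma kernel_form_seq_append:
  assumes sym: "\<And>x y. K x y = K y x"
  shows "kernel_form K (p + N) (seq_append p a b) (seq_append p c d) =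
     kernel_form K p a c + 2 * (\<Sum>i<p. \<Sum>l<N. c i * d l * K (a i) (b l)) + kernel_form K N b d"
proof -
  have "(\<Sum>l<N. \<Sum>i<p. d l * c i * K (b l) (a i)) = (\<Sum>i<p. \<Sum>l<N. c i * d l * K (a i) (b l))"
    by (subst sum.swap) (simp add: sym mult.commute mult.left_commute)
  then show ?thesis
    unfolding kernel_form_def sum_lessThan_add by (simp add: seq_append_def sum.distrib)
qed

locale iid_sample = prob_space \<Omega> for \<Omega> :: "'w measure" +
  fixes Z :: "nat \<Rightarrow> 'w \<Rightarrow> 's" and S :: "'s measure" and \<mu> :: "'s measure"
  assumes prob_space_\<mu>: "prob_space \<mu>" and sets_\<mu>: "sets \<mu> = sets S" and space_S: "space S = UNIV"
    and indep: "indep_vars (\<lambda>_. S) Z UNIV"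
    and distr_Z: "\<And>i. distr \<Omega> S (Z i) = \<mu>"
begin

lemma measurable_Z [measurable]: "Z i \<in> measurable \<Omega> S"
  using indep unfolding indep_vars_def by auto

lemma distr_Z_pair:
  assumes "i \<noteq> j"
  shows "distr \<Omega> (S \<Otimes>\<^sub>M S) (\<lambda>\<omega>. (Z i \<omega>, Z j \<omega>)) = \<mu> \<Otimes>\<^sub>M \<mu>"
proof -
  have "indep_var (PiM {i} (\<lambda>_. S)) (\<lambda>\<omega>. restrict (\<lambda>l. Z l \<omega>) {i})
                  (PiM {j} (\<lambda>_. S)) (\<lambda>\<omega>. restrict (\<lambda>l. Z l \<omega>) {j})"
    using assms by (intro indep_var_restrict[OF indep]) auto
  then have "indep_var S ((\<lambda>f. f i) \<circ> (\<lambda>\<omega>. restrict (\<lambda>l. Z l \<omega>) {i}))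
                        S ((\<lambda>f. f j) \<circ> (\<lambda>\<omega>. restrict (\<lambda>l. Z l \<omega>) {j}))"
    by (rule indep_var_compose) (auto intro: measurable_component_singleton)
  then have "indep_var S (Z i) S (Z j)"
    by (simp add: comp_def)
  then show ?thesis
    unfolding indep_var_distribution_eq by (simp add: distr_Z)
qed

end

locale iid_kernel_sample = iid_sample \<Omega> Z S \<mu>
  for \<Omega> :: "'w measure" and Z :: "nat \<Rightarrow> 'w \<Rightarrow> 's" and S \<mu> +
  fixes K :: "'s \<Rightarrow> 's \<Rightarrow> real"
  assumes K_measurable: "(\<lambda>(a, b). K a b) \<in> borel_measurable (S \<Otimes>\<^sub>M S)"
    and K_bounded: "\<And>a b. \<bar>K a b\<bar> \<le> 1"
    and K_sym: "\<And>a b. K a b = K b a"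
    and K_psd: "\<And>n a c. 0 \<le> kernel_form K n a c"
begin

interpretation \<mu>: prob_space \<mu>
  by (rule prob_space_\<mu>)

definition mean_emb :: "'s \<Rightarrow> real" where
  "mean_emb w = (\<integral>z. K w z \<partial>\<mu>)"

definition mean_emb_sqnorm :: real where
  "mean_emb_sqnorm = (\<integral>w. mean_emb w \<partial>\<mu>)"

lemma measurable_K_left [measurable]: "K w \<in> borel_measurable S"
  using measurable_compose[OF measurable_Pair1'[of w S S] K_measurable] space_S by simp

lemma measurable_mean_emb [measurable]: "mean_emb \<in> borel_measurable S"
proof -
  have "(\<lambda>(a, b). K a b) \<in> borel_measurable (S \<Otimes>\<^sub>M \<mu>)"
    using K_measurable by (simp cong: measurable_cong_sets[OF sets_pair_measure_cong[OF refl sets_\<mu>] refl])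
  then show ?thesis
    unfolding mean_emb_def by (intro \<mu>.borel_measurable_lebesgue_integral) simp
qed

lemma abs_mean_emb_le: "\<bar>mean_emb w\<bar> \<le> 1"
  unfolding mean_emb_def by (rule \<mu>.abs_integral_le_const[OF K_bounded])

lemma abs_mean_emb_sqnorm_le: "\<bar>mean_emb_sqnorm\<bar> \<le> 1"
  unfolding mean_emb_sqnorm_def by (rule \<mu>.abs_integral_le_const[OF abs_mean_emb_le])

lemma integrable_K_Z: "integrable \<Omega> (\<lambda>\<omega>. K (Z i \<omega>) (Z j \<omega>))"
  using K_bounded measurable_compose[OF measurable_Pair[OF measurable_Z measurable_Z] K_measurable]
  by (intro integrable_const_bound[where B=1]) auto

lemma integrable_K_left_Z: "integrable \<Omega> (\<lambda>\<omega>. K w (Z i \<omega>))"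
  using K_bounded by (intro integrable_const_bound[where B=1]) auto

lemma integrable_mean_emb_Z: "integrable \<Omega> (\<lambda>\<omega>. mean_emb (Z i \<omega>))"
  using abs_mean_emb_le by (intro integrable_const_bound[where B=1]) auto

lemma expectation_K_left_Z: "expectation (\<lambda>\<omega>. K w (Z i \<omega>)) = mean_emb w"
  using integral_distr[OF measurable_Z measurable_K_left] by (simp add: distr_Z mean_emb_def)

lemma expectation_mean_emb_Z: "expectation (\<lambda>\<omega>. mean_emb (Z i \<omega>)) = mean_emb_sqnorm"
  using integral_distr[OF measurable_Z measurable_mean_emb] by (simp add: distr_Z mean_emb_sqnorm_def)

lemma expectation_K_Z_indep:
  assumes "i \<noteq> j"
  shows "expectation (\<lambda>\<omega>. K (Z i \<omega>) (Z j \<omega>)) = mean_emb_sqnorm"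
proof -
  interpret \<mu>\<mu>: pair_prob_space \<mu> \<mu> by unfold_locales
  have "integrable (\<mu> \<Otimes>\<^sub>M \<mu>) (\<lambda>(a, b). K a b)"
    using K_bounded K_measurable
    by (intro \<mu>\<mu>.P.integrable_const_bound[where B=1])
       (auto simp: split_beta' cong: measurable_cong_sets[OF sets_pair_measure_cong[OF sets_\<mu> sets_\<mu>] refl])
  from \<mu>\<mu>.integral_fst'[OF this]
  have "integral\<^sup>L (\<mu> \<Otimes>\<^sub>M \<mu>) (\<lambda>(a, b). K a b) = mean_emb_sqnorm"
    by (simp add: mean_emb_sqnorm_def mean_emb_def)
  then show ?thesis
    using integral_distr[OF measurable_Pair[OF measurable_Z[of i] measurable_Z[of j]] K_measurable]
    by (simp add: distr_Z_pair[OF assms])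
qed

lemma sum_expectation_K_Z_le:
  "(\<Sum>i<N. \<Sum>j<N. expectation (\<lambda>\<omega>. K (Z i \<omega>) (Z j \<omega>))) \<le> real N ^ 2 * mean_emb_sqnorm + 2 * real N"
proof -
  have "expectation (\<lambda>\<omega>. K (Z i \<omega>) (Z j \<omega>)) \<le> mean_emb_sqnorm + (if i = j then 2 else 0)" for i j
  proof (cases "i = j")
    case True
    have "expectation (\<lambda>\<omega>. K (Z i \<omega>) (Z j \<omega>)) \<le> 1"
      using K_bounded by (intro integral_le_const integrable_K_Z) (auto simp: abs_le_iff)
    then show ?thesis using True abs_mean_emb_sqnorm_le by (auto simp: abs_le_iff)
  qed (simp add: expectation_K_Z_indep)
  then have "(\<Sum>i<N. \<Sum>j<N. expectation (\<lambda>\<omega>. K (Z i \<omega>) (Z j \<omega>)))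
      \<le> (\<Sum>i<N. \<Sum>j<N. mean_emb_sqnorm + (if i = j then 2 else 0))"
    by (intro sum_mono)
  also have "\<dots> = real N ^ 2 * mean_emb_sqnorm + 2 * real N"
    by (simp add: sum.distrib power2_eq_square algebra_simps)
  finally show ?thesis .
qed

text \<open>Replace the mean embedding by the empirical mean of N sample points: the kernel form of the
  extended system is nonnegative, and in expectation only its diagonal terms, at most
  \<open>2 s\<^sup>2 / N\<close>, differ from the form with the mean embedding.\<close>

lemma kernel_form_mean_emb_nonneg_approx:
  assumes "0 < N"
  shows "0 \<le> kernel_form K p a c + 2 * s * (\<Sum>i<p. c i * mean_emb (a i))
    + s\<^sup>2 * mean_emb_sqnorm + 2 * s\<^sup>2 / real N"
proof -
  define d where "d = s / real N"
  define F where "F \<omega> = kernel_form K (p + N) (seq_append p a (\<lambda>l. Z l \<omega>)) (seq_append p c (\<lambda>_. d))" for \<omega>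
  have F_eq: "F \<omega> = kernel_form K p a c + 2 * (\<Sum>i<p. \<Sum>l<N. c i * d * K (a i) (Z l \<omega>))
       + (\<Sum>l<N. \<Sum>l'<N. d * d * K (Z l \<omega>) (Z l' \<omega>))" for \<omega>
    unfolding F_def kernel_form_seq_append[OF K_sym] by (simp add: kernel_form_def)
  have "0 \<le> expectation F"
    unfolding F_def using K_psd by (intro integral_nonneg_AE) auto
  also have "expectation F = kernel_form K p a c + 2 * (\<Sum>i<p. \<Sum>l<N. c i * d * mean_emb (a i))
       + (\<Sum>l<N. \<Sum>l'<N. d * d * expectation (\<lambda>\<omega>. K (Z l \<omega>) (Z l' \<omega>)))"
    unfolding F_eq
    by (simp add: integral_add integral_sum integrable_K_Z integrable_K_left_Z expectation_K_left_Z
        Bochner_Integration.integrable_sum prob_space)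
  also have "(\<Sum>i<p. \<Sum>l<N. c i * d * mean_emb (a i)) = s * (\<Sum>i<p. c i * mean_emb (a i))"
    using assms by (simp add: d_def sum_distrib_left mult_ac)
  also have "(\<Sum>l<N. \<Sum>l'<N. d * d * expectation (\<lambda>\<omega>. K (Z l \<omega>) (Z l' \<omega>)))
      \<le> d * d * (real N ^ 2 * mean_emb_sqnorm + 2 * real N)"
    unfolding sum_distrib_left[symmetric] by (intro mult_left_mono sum_expectation_K_Z_le) auto
  also have "d * d * (real N ^ 2 * mean_emb_sqnorm + 2 * real N) = s\<^sup>2 * mean_emb_sqnorm + 2 * s\<^sup>2 / real N"
    using assms by (simp add: d_def field_simps power2_eq_square)
  finally show ?thesis
    by (simp add: algebra_simps)
qed

lemma kernel_form_mean_emb_nonneg: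
  "0 \<le> kernel_form K p a c + 2 * s * (\<Sum>i<p. c i * mean_emb (a i)) + s\<^sup>2 * mean_emb_sqnorm"
  (is "0 \<le> ?T")
proof (rule LIMSEQ_le_const)
  show "(\<lambda>N. ?T + 2 * s\<^sup>2 / real N) \<longlonglongrightarrow> ?T"
    using tendsto_add[OF tendsto_const[of ?T] lim_const_over_n[of "2 * s\<^sup>2"]] by simp
  show "\<exists>N0. \<forall>N\<ge>N0. 0 \<le> ?T + 2 * s\<^sup>2 / real N"
    using kernel_form_mean_emb_nonneg_approx by (intro exI[of _ 1]) auto
qed

text \<open>The squared RKHS distance between \<open>1/n \<Sum> \<Phi>(Z\<^sub>i)\<close> and the mean embedding of \<mu>.\<close>

definition emp_mmd2 :: "nat \<Rightarrow> 'w \<Rightarrow> real" where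
  "emp_mmd2 n \<omega> = (\<Sum>i<n. \<Sum>j<n. K (Z i \<omega>) (Z j \<omega>)) / real n ^ 2
     - 2 * (\<Sum>i<n. mean_emb (Z i \<omega>)) / real n + mean_emb_sqnorm"

text \<open>Cauchy-Schwarz, from the kernel form at the points \<open>w, Z\<^sub>0, ..., Z\<^sub>n\<^sub>-\<^sub>1\<close> and the mean
  embedding, with weights \<open>-h, 1/n, ..., 1/n, -1\<close>.\<close>

lemma sample_dev_sq_le_emp_mmd2:
  assumes "0 < n"
  shows "(sample_dev \<mu> (\<lambda>i. Z i \<omega>) n (K w))\<^sup>2 \<le> emp_mmd2 n \<omega>"
proof -
  define h where "h = sample_dev \<mu> (\<lambda>i. Z i \<omega>) n (K w)"
  define a where "a = seq_append 1 (\<lambda>_. w) (\<lambda>i. Z i \<omega>)"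
  define c where "c = seq_append 1 (\<lambda>_. - h) (\<lambda>_::nat. 1 / real n)"
  have form: "kernel_form K (1 + n) a c = h\<^sup>2 * K w w - 2 * h * (\<Sum>l<n. K w (Z l \<omega>)) / real n
       + (\<Sum>i<n. \<Sum>j<n. K (Z i \<omega>) (Z j \<omega>)) / real n ^ 2"
    unfolding a_def c_def kernel_form_seq_append[OF K_sym]
    by (simp add: kernel_form_def seq_append_def sum_distrib_left sum_divide_distrib sum_negf
        power2_eq_square mult.assoc)
  have mean: "(\<Sum>i<1 + n. c i * mean_emb (a i)) = - h * mean_emb w + (\<Sum>i<n. mean_emb (Z i \<omega>)) / real n"
    unfolding sum_lessThan_add a_def c_def by (simp add: seq_append_def sum_divide_distrib)
  have h_eq: "h = (\<Sum>l<n. K w (Z l \<omega>)) / real n - mean_emb w"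
    by (simp add: h_def sample_dev_def mean_emb_def)
  have "0 \<le> kernel_form K (1 + n) a c + 2 * (-1) * (\<Sum>i<1 + n. c i * mean_emb (a i))
      + (-1)\<^sup>2 * mean_emb_sqnorm"
    by (rule kernel_form_mean_emb_nonneg)
  also have "\<dots> = h\<^sup>2 * K w w - 2 * h\<^sup>2 + emp_mmd2 n \<omega>"
    unfolding form mean emp_mmd2_def using assms by (simp add: h_eq power2_eq_square field_simps)
  finally have "0 \<le> h\<^sup>2 * K w w - 2 * h\<^sup>2 + emp_mmd2 n \<omega>" .
  moreover have "h\<^sup>2 * K w w \<le> h\<^sup>2"
    using K_bounded[of w w] by (intro mult_left_le) (auto simp: abs_le_iff)
  ultimately show ?thesis
    unfolding h_def by linarith
qed

lemma emp_mmd2_nonneg: "0 < n \<Longrightarrow> 0 \<le> emp_mmd2 n \<omega>"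
  using sample_dev_sq_le_emp_mmd2 by (meson order_trans zero_le_power2)

lemma integrable_emp_mmd2: "integrable \<Omega> (emp_mmd2 n)"
  unfolding emp_mmd2_def
  by (simp add: integrable_K_Z integrable_mean_emb_Z Bochner_Integration.integrable_sum)

lemma expectation_emp_mmd2_le:
  assumes "0 < n"
  shows "expectation (emp_mmd2 n) \<le> 2 / real n"
proof -
  have "expectation (emp_mmd2 n) = (\<Sum>i<n. \<Sum>j<n. expectation (\<lambda>\<omega>. K (Z i \<omega>) (Z j \<omega>))) / real n ^ 2
      - 2 * real n * mean_emb_sqnorm / real n + mean_emb_sqnorm"
    unfolding emp_mmd2_def
    by (simp add: integral_add integral_diff integral_sum integrable_K_Z integrable_mean_emb_Z
        expectation_mean_emb_Z Bochner_Integration.integrable_sum prob_space)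
  also have "\<dots> \<le> (real n ^ 2 * mean_emb_sqnorm + 2 * real n) / real n ^ 2
      - 2 * real n * mean_emb_sqnorm / real n + mean_emb_sqnorm"
    by (intro add_mono diff_mono divide_right_mono sum_expectation_K_Z_le) auto
  also have "\<dots> = 2 / real n"
    using assms by (simp add: field_simps power2_eq_square)
  finally show ?thesis .
qed

lemma AE_emp_mmd2_squares_tendsto_0: "AE \<omega> in \<Omega>. (\<lambda>n. emp_mmd2 (n\<^sup>2) \<omega>) \<longlonglongrightarrow> 0"
proof -
  have "summable (\<lambda>n. inverse (real (Suc n) ^ 2))"
    using inverse_power_summable[of 2, where 'a=real] by (subst summable_Suc_iff) simp
  then have "summable (\<lambda>n. 2 * inverse (real (Suc n) ^ 2))"
    by (rule summable_mult)
  then have "summable (\<lambda>n. expectation (emp_mmd2 ((Suc n)\<^sup>2)))"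
  proof (rule summable_comparison_test'[where N=0])
    fix n :: nat
    have "0 \<le> expectation (emp_mmd2 ((Suc n)\<^sup>2))"
      using emp_mmd2_nonneg by (intro integral_nonneg_AE) simp
    with expectation_emp_mmd2_le[of "(Suc n)\<^sup>2"]
    show "norm (expectation (emp_mmd2 ((Suc n)\<^sup>2))) \<le> 2 * inverse (real (Suc n) ^ 2)"
      by (simp add: divide_inverse)
  qed
  then have "AE \<omega> in \<Omega>. (\<lambda>n. emp_mmd2 ((Suc n)\<^sup>2) \<omega>) \<longlonglongrightarrow> 0"
    using integrable_emp_mmd2 emp_mmd2_nonneg by (intro AE_tendsto_0_if_summable_integral) auto
  then show ?thesis
    by (rule AE_mp) (auto intro: LIMSEQ_imp_Suc)
qed

lemma abs_sample_dev_le_emp_mmd2_floor_sqrt: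
  assumes "0 < N"
  shows "\<bar>sample_dev \<mu> (\<lambda>i. Z i \<omega>) N (K w)\<bar>
    \<le> sqrt (emp_mmd2 ((floor_sqrt N)\<^sup>2) \<omega>) + 4 / real (floor_sqrt N)"
proof -
  let ?r = "floor_sqrt N"
  have "\<bar>sample_dev \<mu> (\<lambda>i. Z i \<omega>) N (K w)\<bar>
      \<le> \<bar>sample_dev \<mu> (\<lambda>i. Z i \<omega>) (?r\<^sup>2) (K w)\<bar> + 2 * real (N - ?r\<^sup>2) / real N"
    using assms K_bounded by (intro abs_sample_dev_le_prefix prob_space_\<mu>) auto
  also have "\<bar>sample_dev \<mu> (\<lambda>i. Z i \<omega>) (?r\<^sup>2) (K w)\<bar> \<le> sqrt (emp_mmd2 (?r\<^sup>2) \<omega>)"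
    using real_sqrt_le_mono[OF sample_dev_sq_le_emp_mmd2[of "?r\<^sup>2" \<omega> w]] assms by simp
  also have "2 * real (N - ?r\<^sup>2) / real N \<le> 4 / real ?r"
    by (rule floor_sqrt_gap_le[OF assms])
  finally show ?thesis
    by simp
qed

lemma AE_SUP_sample_dev_tendsto_0:
  "AE \<omega> in \<Omega>. (\<lambda>n. SUP w. \<bar>sample_dev \<mu> (\<lambda>i. Z i \<omega>) n (K w)\<bar>) \<longlonglongrightarrow> 0"
  using AE_emp_mmd2_squares_tendsto_0
proof (rule AE_mp, intro AE_I2 impI)
  fix \<omega> assume "(\<lambda>n. emp_mmd2 (n\<^sup>2) \<omega>) \<longlonglongrightarrow> 0"
  then have "(\<lambda>N. sqrt (emp_mmd2 ((floor_sqrt N)\<^sup>2) \<omega>) + 4 / real (floor_sqrt N)) \<longlonglongrightarrow> sqrt 0 + 0"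
    by (intro tendsto_add tendsto_real_sqrt filterlim_compose[OF _ filterlim_floor_sqrt_at_top]
        tendsto_divide_0[OF tendsto_const] filterlim_at_top_imp_at_infinity
        filterlim_compose[OF filterlim_real_sequentially filterlim_floor_sqrt_at_top])
  moreover have "eventually (\<lambda>N. \<forall>w. \<bar>sample_dev \<mu> (\<lambda>i. Z i \<omega>) N (K w)\<bar>
      \<le> sqrt (emp_mmd2 ((floor_sqrt N)\<^sup>2) \<omega>) + 4 / real (floor_sqrt N)) sequentially"
    using eventually_gt_at_top[of 0] by eventually_elim (intro allI abs_sample_dev_le_emp_mmd2_floor_sqrt)
  ultimately show "(\<lambda>n. SUP w. \<bar>sample_dev \<mu> (\<lambda>i. Z i \<omega>) n (K w)\<bar>) \<longlonglongrightarrow> 0"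
    by (intro tendsto_SUP_abs_0) auto
qed

end

section \<open>Kernels restricted to a missingness pattern\<close>

definition pattern_kernel :: "(real list \<Rightarrow> real list \<Rightarrow> real) \<Rightarrow> ('d::{finite,linorder} \<Rightarrow> bool)
    \<Rightarrow> (real ^ 'd::{finite,linorder}) \<times> ('d::{finite,linorder} \<Rightarrow> bool)
    \<Rightarrow> (real ^ 'd::{finite,linorder}) \<times> ('d::{finite,linorder} \<Rightarrow> bool) \<Rightarrow> real" where
  "pattern_kernel k m a b =
     (if snd a = m \<and> snd b = m then k (obs_sub m (fst a)) (obs_sub m (fst b)) else 0)"

lemma abs_pattern_kernel_le: "(\<And>u v. \<bar>k u v\<bar> \<le> 1) \<Longrightarrow> \<bar>pattern_kernel k m a b\<bar> \<le> 1"
  by (simp add: pattern_kernel_def)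

lemma pd_kernel_const_one: "pd_kernel (\<lambda>_ _. 1)"
  unfolding pd_kernel_def by (simp add: sum_product[symmetric])

lemma kernel_form_pattern_kernel_nonneg:
  assumes "pd_kernel k"
  shows "0 \<le> kernel_form (pattern_kernel k m) n a c"
proof -
  define c' where "c' i = (if snd (a i) = m then c i else 0)" for i
  define xs where "xs i = obs_sub m (fst (a i))" for i
  have "kernel_form (pattern_kernel k m) n a c = (\<Sum>i<n. \<Sum>j<n. c' i * c' j * k (xs i) (xs j))"
    unfolding kernel_form_def pattern_kernel_def c'_def xs_def by (intro sum.cong refl) auto
  also have "0 \<le> \<dots>"
    using assms unfolding pd_kernel_def
    by (elim conjE allE[of _ "card {j. \<not> m j}"] allE[of _ n] allE[of _ xs] allE[of _ c'] mp)
      (simp add: xs_def obs_sub_def)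
  finally show ?thesis .
qed

lemma measurable_pattern_kernel:
  fixes m :: "'d::{finite,linorder} \<Rightarrow> bool"
  assumes k_meas: "(\<lambda>(x, y). k (obs_sub m x) (obs_sub m y)) \<in> borel_measurable (borel \<Otimes>\<^sub>M borel)"
  shows "(\<lambda>(a, b). pattern_kernel k m a b) \<in> borel_measurable
     ((borel \<Otimes>\<^sub>M count_space UNIV) \<Otimes>\<^sub>M (borel \<Otimes>\<^sub>M count_space UNIV))"
proof -
  have "(\<lambda>p. (\<lambda>(x, y). k (obs_sub m x) (obs_sub m y)) (fst (fst p), fst (snd p)))
     \<in> borel_measurable ((borel \<Otimes>\<^sub>M count_space UNIV) \<Otimes>\<^sub>M (borel \<Otimes>\<^sub>M (count_space UNIV :: ('d \<Rightarrow> bool) measure)))"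
    by (rule measurable_compose[OF _ k_meas]) measurable
  then have [measurable]: "(\<lambda>p. k (obs_sub m (fst (fst p))) (obs_sub m (fst (snd p))))
     \<in> borel_measurable ((borel \<Otimes>\<^sub>M count_space UNIV) \<Otimes>\<^sub>M (borel \<Otimes>\<^sub>M (count_space UNIV :: ('d \<Rightarrow> bool) measure)))"
    by simp
  show ?thesis
    unfolding pattern_kernel_def split_beta' by measurable
qed

lemma iid_kernel_sample_pattern_kernel:
  fixes m :: "'d::{finite,linorder} \<Rightarrow> bool"
  assumes "iid_sample \<Omega> Z (borel \<Otimes>\<^sub>M count_space UNIV) \<mu>" and "pd_kernel k"
    and "\<And>u v. \<bar>k u v\<bar> \<le> 1"
    and "(\<lambda>(x, y). k (obs_sub m x) (obs_sub m y)) \<in> borel_measurable (borel \<Otimes>\<^sub>M borel)"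
  shows "iid_kernel_sample \<Omega> Z (borel \<Otimes>\<^sub>M count_space UNIV) \<mu> (pattern_kernel k m)"
proof (intro iid_kernel_sample.intro iid_kernel_sample_axioms.intro)
  show "0 \<le> kernel_form (pattern_kernel k m) n a c" for n a c
    by (rule kernel_form_pattern_kernel_nonneg) fact
  show "pattern_kernel k m a b = pattern_kernel k m b a" for a b
    using \<open>pd_kernel k\<close> by (auto simp: pattern_kernel_def pd_kernel_def)
qed (simp_all add: assms measurable_pattern_kernel abs_pattern_kernel_le)

text \<open>The point (0, m) only fixes the pattern: \<open>pattern_kernel (\<lambda>_ _. 1) m (0, m) (x, m')\<close> is the
  indicator of \<open>m' = m\<close>.\<close>

lemma mmd_loss_eq_sum_pattern_kernel:
  "mmd_loss k Q x m' = (\<Sum>m\<in>- {\<lambda>_. True}.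
     emb_inner_self k Q m * pattern_kernel (\<lambda>_ _. 1) m (0, m) (x, m')
     - 2 * (\<integral>y. pattern_kernel k m (y, m) (x, m') \<partial>Q))"
proof -
  have "emb_inner_self k Q m * pattern_kernel (\<lambda>_ _. 1) m (0, m) (x, m')
      - 2 * (\<integral>y. pattern_kernel k m (y, m) (x, m') \<partial>Q)
    = (if m' = m then emb_inner_self k Q m - 2 * emb_inner_pt k Q m x else 0)" for m
    by (cases "m' = m") (simp_all add: pattern_kernel_def emb_inner_pt_def)
  then show ?thesis
    by (simp add: mmd_loss_def sum.delta)
qed

context
  fixes k :: "real list \<Rightarrow> real list \<Rightarrow> real"
    and Q :: "(real ^ 'd::{finite,linorder}) measure"
    and \<mu> :: "((real ^ 'd::{finite,linorder}) \<times> ('d::{finite,linorder} \<Rightarrow> bool)) measure"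
  assumes k_bounded: "\<And>u v. \<bar>k u v\<bar> \<le> 1"
    and k_meas: "\<And>m :: 'd \<Rightarrow> bool. (\<lambda>(x, y). k (obs_sub m x) (obs_sub m y))
                        \<in> borel_measurable (borel \<Otimes>\<^sub>M borel)"
    and Q: "prob_space Q" "sets Q = sets borel"
    and \<mu>: "prob_space \<mu>" "sets \<mu> = sets (borel \<Otimes>\<^sub>M count_space UNIV)"
begin

interpretation Q: prob_space Q
  by (rule Q(1))

interpretation \<mu>: prob_space \<mu>
  by (rule \<mu>(1))

lemma measurable_pattern_kernel_section:
  "(\<lambda>(y, w). pattern_kernel k m (y, m) w) \<in> borel_measurable (Q \<Otimes>\<^sub>M \<mu>)"
proof -
  have "(\<lambda>p. ((fst p, m), snd p)) \<in> measurable (borel \<Otimes>\<^sub>M (borel \<Otimes>\<^sub>M count_space UNIV))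
      ((borel \<Otimes>\<^sub>M count_space UNIV) \<Otimes>\<^sub>M (borel \<Otimes>\<^sub>M count_space UNIV))"
    by measurable
  from measurable_compose[OF this measurable_pattern_kernel[OF k_meas]] show ?thesis
    by (simp add: split_beta' cong: measurable_cong_sets[OF sets_pair_measure_cong[OF Q(2) \<mu>(2)] refl])
qed

lemma integrable_pattern_kernel_const_one: "integrable \<mu> (pattern_kernel (\<lambda>_ _. 1) m w)"
proof (rule \<mu>.integrable_const_bound[where B=1])
  show "pattern_kernel (\<lambda>_ _. 1) m w \<in> borel_measurable \<mu>"
    unfolding measurable_cong_sets[OF \<mu>(2) refl] pattern_kernel_def by measurable
qed (simp add: pattern_kernel_def)

lemma integrable_integral_pattern_kernel:
  "integrable \<mu> (\<lambda>w. \<integral>y. pattern_kernel k m (y, m) w \<partial>Q)"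
proof (rule \<mu>.integrable_const_bound[where B=1])
  have "(\<lambda>(w, y). pattern_kernel k m (y, m) w) \<in> borel_measurable (\<mu> \<Otimes>\<^sub>M Q)"
    using measurable_pattern_kernel_section[of m]
    by (subst measurable_pair_swap_iff) (simp add: split_beta')
  then show "(\<lambda>w. \<integral>y. pattern_kernel k m (y, m) w \<partial>Q) \<in> borel_measurable \<mu>"
    by (rule Q.borel_measurable_lebesgue_integral)
  show "AE w in \<mu>. norm (\<integral>y. pattern_kernel k m (y, m) w \<partial>Q) \<le> 1"
    by (intro AE_I2) (simp add: Q.abs_integral_le_const abs_pattern_kernel_le k_bounded)
qed

lemma sample_dev_mmd_loss_eq:
  "sample_dev \<mu> z n (\<lambda>w. mmd_loss k Q (fst w) (snd w))
    = (\<Sum>m\<in>- {\<lambda>_. True}. emb_inner_self k Q m * sample_dev \<mu> z n (pattern_kernel (\<lambda>_ _. 1) m (0, m))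
        - 2 * (\<integral>y. sample_dev \<mu> z n (pattern_kernel k m (y, m)) \<partial>Q))"
proof -
  have space_\<mu>: "space \<mu> = UNIV"
    using sets_eq_imp_space_eq[OF \<mu>(2)] by (simp add: space_pair_measure)
  have "sample_dev \<mu> z n (\<lambda>w. mmd_loss k Q (fst w) (snd w))
      = (\<Sum>m\<in>- {\<lambda>_. True}. sample_dev \<mu> z n (\<lambda>w.
          emb_inner_self k Q m * pattern_kernel (\<lambda>_ _. 1) m (0, m) w
          - 2 * (\<integral>y. pattern_kernel k m (y, m) w \<partial>Q)))"
    unfolding mmd_loss_eq_sum_pattern_kernel prod.collapse
    by (rule sample_dev_sum)
       (simp_all add: integrable_pattern_kernel_const_one integrable_integral_pattern_kernel)
  also have "\<dots> = (\<Sum>m\<in>- {\<lambda>_. True}. emb_inner_self k Q m * sample_dev \<mu> z n (pattern_kernel (\<lambda>_ _. 1) m (0, m))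
        - 2 * (\<integral>y. sample_dev \<mu> z n (pattern_kernel k m (y, m)) \<partial>Q))"
    by (simp add: sample_dev_lincomb integrable_pattern_kernel_const_one integrable_integral_pattern_kernel
        sample_dev_integral[OF Q(1) \<mu>(1) measurable_pattern_kernel_section abs_pattern_kernel_le[OF k_bounded]]
        space_\<mu>)
  finally show ?thesis .
qed

lemma abs_sample_dev_mmd_loss_le:
  "\<bar>sample_dev \<mu> z n (\<lambda>w. mmd_loss k Q (fst w) (snd w))\<bar>
    \<le> (\<Sum>m\<in>- {\<lambda>_. True}. (SUP w. \<bar>sample_dev \<mu> z n (pattern_kernel (\<lambda>_ _. 1) m w)\<bar>)
                          + 2 * (SUP w. \<bar>sample_dev \<mu> z n (pattern_kernel k m w)\<bar>))"
  unfolding sample_dev_mmd_loss_eq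
proof (intro order_trans[OF sum_abs] sum_mono order_trans[OF abs_triangle_ineq4] add_mono)
  fix m :: "'d \<Rightarrow> bool"
  have "\<bar>emb_inner_self k Q m\<bar> \<le> 1"
    unfolding emb_inner_self_def by (intro Q.abs_integral_le_const k_bounded)
  moreover have "\<bar>sample_dev \<mu> z n (pattern_kernel (\<lambda>_ _. 1) m (0, m))\<bar>
      \<le> (SUP w. \<bar>sample_dev \<mu> z n (pattern_kernel (\<lambda>_ _. 1) m w)\<bar>)"
    by (rule abs_sample_dev_le_SUP[OF \<mu>(1) abs_pattern_kernel_le]) simp
  ultimately show "\<bar>emb_inner_self k Q m * sample_dev \<mu> z n (pattern_kernel (\<lambda>_ _. 1) m (0, m))\<bar>
      \<le> (SUP w. \<bar>sample_dev \<mu> z n (pattern_kernel (\<lambda>_ _. 1) m w)\<bar>)"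
    unfolding abs_mult by (metis abs_ge_zero mult_1_left mult_mono zero_le_one)
  have "\<bar>\<integral>y. sample_dev \<mu> z n (pattern_kernel k m (y, m)) \<partial>Q\<bar>
      \<le> (SUP w. \<bar>sample_dev \<mu> z n (pattern_kernel k m w)\<bar>)"
    by (intro Q.abs_integral_le_const abs_sample_dev_le_SUP[OF \<mu>(1) abs_pattern_kernel_le[OF k_bounded]])
  then show "\<bar>2 * (\<integral>y. sample_dev \<mu> z n (pattern_kernel k m (y, m)) \<partial>Q)\<bar>
      \<le> 2 * (SUP w. \<bar>sample_dev \<mu> z n (pattern_kernel k m w)\<bar>)"
    by (simp add: abs_mult)
qed

end

theorem lemma1:
  fixes k :: "real list \<Rightarrow> real list \<Rightarrow> real"
    and P :: "'t \<Rightarrow> (real ^ 'd::{finite,linorder}) measure"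
    and PXM :: "((real ^ 'd::{finite,linorder}) \<times> ('d::{finite,linorder} \<Rightarrow> bool)) measure"
    and \<Omega> :: "'w measure"
    and Z :: "nat \<Rightarrow> 'w \<Rightarrow> (real ^ 'd::{finite,linorder}) \<times> ('d::{finite,linorder} \<Rightarrow> bool)"
  assumes k_pd: "pd_kernel k"
    and k_bounded: "\<And>u v. \<bar>k u v\<bar> \<le> 1"
    and k_meas: "\<And>m :: 'd::{finite,linorder} \<Rightarrow> bool. (\<lambda>(x, y). k (obs_sub m x) (obs_sub m y))
                        \<in> borel_measurable (borel \<Otimes>\<^sub>M borel)"
    and model: "\<And>\<theta>. prob_space (P \<theta>) \<and> sets (P \<theta>) = sets borel"
    and PXM: "prob_space PXM" "sets PXM = sets (borel \<Otimes>\<^sub>M count_space UNIV)"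
    and \<Omega>: "prob_space \<Omega>"
    and indep: "prob_space.indep_vars \<Omega> (\<lambda>_. borel \<Otimes>\<^sub>M count_space UNIV) Z UNIV"
    and ident: "\<And>i. distr \<Omega> (borel \<Otimes>\<^sub>M count_space UNIV) (Z i) = PXM"
  shows "AE \<omega> in \<Omega>.
     (\<lambda>n. SUP \<theta>. \<bar>(1 / real n) * (\<Sum>i<n. mmd_loss k (P \<theta>) (fst (Z i \<omega>)) (snd (Z i \<omega>)))
                 - (\<integral>z. mmd_loss k (P \<theta>) (fst z) (snd z) \<partial>PXM)\<bar>) \<longlonglongrightarrow> 0"
proof -
  have sample: "iid_sample \<Omega> Z (borel \<Otimes>\<^sub>M count_space UNIV) PXM"
    using \<Omega> PXM indep ident
    by (intro iid_sample.intro iid_sample_axioms.intro) (simp_all add: space_pair_measure)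
  let ?dev = "\<lambda>k' m \<omega> n. SUP w. \<bar>sample_dev PXM (\<lambda>i. Z i \<omega>) n (pattern_kernel k' m w)\<bar>"
  have "AE \<omega> in \<Omega>. \<forall>m\<in>- {\<lambda>_. True}. ?dev (\<lambda>_ _. 1) m \<omega> \<longlonglongrightarrow> 0 \<and> ?dev k m \<omega> \<longlonglongrightarrow> 0"
    using k_pd k_bounded k_meas pd_kernel_const_one
    by (intro AE_finite_allI AE_conjI iid_kernel_sample_pattern_kernel[OF sample]
        iid_kernel_sample.AE_SUP_sample_dev_tendsto_0[of \<Omega> Z "borel \<Otimes>\<^sub>M count_space UNIV"]) auto
  then show ?thesis
  proof eventually_elim
    case (elim \<omega>)
    have lim: "(\<lambda>n. \<Sum>m\<in>- {\<lambda>_. True}. ?dev (\<lambda>_ _. 1) m \<omega> n + 2 * ?dev k m \<omega> n) \<longlonglongrightarrow> 0"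
      using elim by (intro tendsto_null_sum tendsto_add_zero tendsto_mult_right_zero) auto
    have bound: "\<forall>\<theta>. \<bar>sample_dev PXM (\<lambda>i. Z i \<omega>) n (\<lambda>z. mmd_loss k (P \<theta>) (fst z) (snd z))\<bar>
        \<le> (\<Sum>m\<in>- {\<lambda>_. True}. ?dev (\<lambda>_ _. 1) m \<omega> n + 2 * ?dev k m \<omega> n)" for n
      using model by (intro allI abs_sample_dev_mmd_loss_le[OF k_bounded k_meas _ _ PXM]) auto
    have "(\<lambda>n. SUP \<theta>. \<bar>sample_dev PXM (\<lambda>i. Z i \<omega>) n (\<lambda>z. mmd_loss k (P \<theta>) (fst z) (snd z))\<bar>)
        \<longlonglongrightarrow> 0"
      by (rule tendsto_SUP_abs_0[OF always_eventually[OF allI[OF bound]] lim])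
    then show ?case
      by (simp only: sample_dev_def times_divide_eq_left mult_1_left)
  qed
qed

end
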